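(* Let $d\ge 1$ and $L_{2d}=2U\oplus 2E_8(-1)\oplus\langle -2d\rangle$. Let $r\in L_{2d}$ be a primitive vector such that the reflection $\sigma_r\colon l\mapsto l-\frac{2(l,r)}{(r,r)}r$ lies in $\mathrm O(L_{2d})$. Then $\sigma_r$ induces $\pm\mathrm{id}$ on the discriminant group $L_{2d}^\vee/L_{2d}$ if and only if either $r^2=\pm2$, or $r^2=\pm 2d$ and $\mathrm{div}(r)\in\{d,2d\}$.
   Context: $U$ is the hyperbolic plane, $E_8(-1)$ the negative definite $E_8$ lattice, $\langle -2d\rangle$ the rank one lattice with generator of square $-2d$. For $l\in L$, $\mathrm{div}(l)$ is the positive generator of the ideal $(l,L)\subset\mathbb Z$. *)

theory Defs
  imports Complex_Main
begin

text \<open>The lattice L_2d = 2U + 2E8(-1) + <-2d> of rank 21, realised on Z^21 with coordinates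
  0..20. Vectors of the rational hull L_2d (x) Q are functions nat => rat vanishing from index 21 on.
  Indices 0,1 and 2,3: two copies of U; 4..11 and 12..19: two copies of E8(-1);
  20: generator of square -2d.\<close>

definition e8_edge :: "nat \<Rightarrow> nat \<Rightarrow> bool" where
  "e8_edge i j \<longleftrightarrow> (i, j) \<in> {(0,1),(1,2),(2,3),(3,4),(4,5),(5,6),(4,7)}
                     \<or> (j, i) \<in> {(0,1),(1,2),(2,3),(3,4),(4,5),(5,6),(4,7)}"

text \<open>Gram matrix of E8(-1): negative of the E8 Cartan matrix (Dynkin diagram T_{2,3,5}).\<close>
definition e8m :: "nat \<Rightarrow> nat \<Rightarrow> int" where
  "e8m i j = (if i = j then -2 else if e8_edge i j then 1 else 0)"

definition gram :: "int \<Rightarrow> nat \<Rightarrow> nat \<Rightarrow> int" where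
  "gram d i j =
     (if i < 2 \<and> j < 2 then (if i \<noteq> j then 1 else 0)
      else if 2 \<le> i \<and> i < 4 \<and> 2 \<le> j \<and> j < 4 then (if i \<noteq> j then 1 else 0)
      else if 4 \<le> i \<and> i < 12 \<and> 4 \<le> j \<and> j < 12 then e8m (i - 4) (j - 4)
      else if 12 \<le> i \<and> i < 20 \<and> 12 \<le> j \<and> j < 20 then e8m (i - 12) (j - 12)
      else if i = 20 \<and> j = 20 then -2 * d
      else 0)"

definition bf :: "int \<Rightarrow> (nat \<Rightarrow> rat) \<Rightarrow> (nat \<Rightarrow> rat) \<Rightarrow> rat" where
  "bf d x y = (\<Sum>i<21. \<Sum>j<21. x i * of_int (gram d i j) * y j)"

definition QV :: "(nat \<Rightarrow> rat) set" where
  "QV = {x. \<forall>i\<ge>21. x i = 0}"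

definition Lat :: "(nat \<Rightarrow> rat) set" where
  "Lat = {x. (\<forall>i. x i \<in> \<int>) \<and> (\<forall>i\<ge>21. x i = 0)}"

definition dual_lat :: "int \<Rightarrow> (nat \<Rightarrow> rat) set" where
  "dual_lat d = {x \<in> QV. \<forall>l\<in>Lat. bf d x l \<in> \<int>}"

definition primitive :: "(nat \<Rightarrow> rat) \<Rightarrow> bool" where
  "primitive r \<longleftrightarrow> r \<in> Lat \<and>
     (\<forall>(k::int) y. y \<in> Lat \<longrightarrow> r = (\<lambda>i. of_int k * y i) \<longrightarrow> \<bar>k\<bar> = 1)"

definition reflection :: "int \<Rightarrow> (nat \<Rightarrow> rat) \<Rightarrow> (nat \<Rightarrow> rat) \<Rightarrow> (nat \<Rightarrow> rat)" where
  "reflection d r x = (\<lambda>i. x i - (2 * bf d x r / bf d r r) * r i)"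

definition in_O :: "int \<Rightarrow> ((nat \<Rightarrow> rat) \<Rightarrow> (nat \<Rightarrow> rat)) \<Rightarrow> bool" where
  "in_O d f \<longleftrightarrow> bij_betw f Lat Lat \<and> (\<forall>x\<in>Lat. \<forall>y\<in>Lat. bf d (f x) (f y) = bf d x y)"

definition induces_id :: "int \<Rightarrow> ((nat \<Rightarrow> rat) \<Rightarrow> (nat \<Rightarrow> rat)) \<Rightarrow> bool" where
  "induces_id d f \<longleftrightarrow> (\<forall>x\<in>dual_lat d. (\<lambda>i. f x i - x i) \<in> Lat)"

definition induces_minus_id :: "int \<Rightarrow> ((nat \<Rightarrow> rat) \<Rightarrow> (nat \<Rightarrow> rat)) \<Rightarrow> bool" where
  "induces_minus_id d f \<longleftrightarrow> (\<forall>x\<in>dual_lat d. (\<lambda>i. f x i + x i) \<in> Lat)"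

definition divisibility :: "int \<Rightarrow> (nat \<Rightarrow> rat) \<Rightarrow> int" where
  "divisibility d r = (THE k. k > 0 \<and>
      {bf d l r | l. l \<in> Lat} = {of_int (k * m) | m. True})"

end

theory Submission
  imports Defs
begin

text \<open>Let e be the basis vector of <-2d> and a the e-coordinate of r. Since the rest of
  L_2d is unimodular, L^v = L + Z e/2d, so sigma_r induces +id (resp. -id) on L^v/L exactly when
  sigma_r(e/2d) - e/2d (resp. sigma_r(e/2d) + e/2d) lies in L, and sigma_r(e/2d) = e/2d + (2a/r^2) r.
  As r is primitive, c r lies in L only for integral c, and as sigma_r preserves L, r^2 divides
  2(l,r) for every l in L. For +id this gives r^2 | 2, i.e. r^2 = +-2. For -id the number
  k = 2d/r^2 is an integer dividing d with d | 1 + k a^2, so k = +-1 and r^2 = +-2d; conversely,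
  if r^2 = +-2d then d divides the coordinates of r in the unimodular part, so
  r^2 = 2d(dq - a^2) for some integer q, and the -id condition follows. Finally
  div(r) | r^2 | 2 div(r), so div(r) is d or 2d once r^2 = +-2d.\<close>

definition e8m_inv :: "nat \<Rightarrow> nat \<Rightarrow> int" where
  "e8m_inv i j = [[-2, -3, -4, -5, -6, -4, -2, -3], [-3, -6, -8, -10, -12, -8, -4, -6],
    [-4, -8, -12, -15, -18, -12, -6, -9], [-5, -10, -15, -20, -24, -16, -8, -12],
    [-6, -12, -18, -24, -30, -20, -10, -15], [-4, -8, -12, -16, -20, -14, -7, -10],
    [-2, -4, -6, -8, -10, -7, -4, -5], [-3, -6, -9, -12, -15, -10, -5, -8]] ! i ! j"

definition unimod_gram_inv :: "nat \<Rightarrow> nat \<Rightarrow> int" where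
  "unimod_gram_inv i j =
     (if i < 2 \<and> j < 2 then (if i \<noteq> j then 1 else 0)
      else if 2 \<le> i \<and> i < 4 \<and> 2 \<le> j \<and> j < 4 then (if i \<noteq> j then 1 else 0)
      else if 4 \<le> i \<and> i < 12 \<and> 4 \<le> j \<and> j < 12 then e8m_inv (i - 4) (j - 4)
      else if 12 \<le> i \<and> i < 20 \<and> 12 \<le> j \<and> j < 20 then e8m_inv (i - 12) (j - 12)
      else 0)"

lemma unimod_gram_inv_mult_code:
  "list_all (\<lambda>k. list_all (\<lambda>j. (\<Sum>i\<leftarrow>[0..<20]. unimod_gram_inv k i * gram 0 i j)
     = (if j = k then 1 else 0)) [0..<21]) [0..<20]"
  by code_simp

lemma unimod_gram_inv_mult:
  assumes "k < 20" "j < 21"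
  shows "(\<Sum>i<20. unimod_gram_inv k i * gram d i j) = (if j = k then 1 else 0)"
proof -
  have "(\<Sum>i<20. unimod_gram_inv k i * gram d i j) = (\<Sum>i<20. unimod_gram_inv k i * gram 0 i j)"
    by (intro sum.cong) (auto simp: gram_def)
  also have "\<dots> = (\<Sum>i\<leftarrow>[0..<20]. unimod_gram_inv k i * gram 0 i j)"
    by (simp add: sum_set_upt_conv_sum_list_nat[symmetric] lessThan_atLeast0)
  also have "\<dots> = (if j = k then 1 else 0)"
    using unimod_gram_inv_mult_code assms by (simp add: list_all_iff)
  finally show ?thesis .
qed

lemma e8_edge_commute: "e8_edge i j = e8_edge j i"
  unfolding e8_edge_def by (rule disj_commute)

lemma gram_commute: "gram d i j = gram d j i"
proof -
  have "e8m i j = e8m j i" for i j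
    unfolding e8m_def by (simp only: e8_edge_commute eq_commute[of i j])
  moreover have "i < 2 \<or> (2 \<le> i \<and> i < 4) \<or> (4 \<le> i \<and> i < 12) \<or> (12 \<le> i \<and> i < 20) \<or> i = 20 \<or> i > 20"
    and "j < 2 \<or> (2 \<le> j \<and> j < 4) \<or> (4 \<le> j \<and> j < 12) \<or> (12 \<le> j \<and> j < 20) \<or> j = 20 \<or> j > 20"
    by arith+
  ultimately show ?thesis
    by (elim disjE) (simp_all add: gram_def eq_commute[of i j])
qed

lemma bf_commute: "bf d x y = bf d y x"
  unfolding bf_def by (subst sum.swap) (simp add: gram_commute mult_ac)

lemma bf_add_left: "bf d (\<lambda>i. x i + y i) z = bf d x z + bf d y z"
  unfolding bf_def by (simp add: algebra_simps sum.distrib)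

lemma bf_diff_left: "bf d (\<lambda>i. x i - y i) z = bf d x z - bf d y z"
  unfolding bf_def by (simp add: algebra_simps sum_subtractf)

lemma bf_scale_left: "bf d (\<lambda>i. c * x i) z = c * bf d x z"
  unfolding bf_def by (simp add: sum_distrib_left mult_ac)

lemma bf_add_right: "bf d z (\<lambda>i. x i + y i) = bf d z x + bf d z y"
  using bf_add_left bf_commute by metis

lemma bf_scale_right: "bf d z (\<lambda>i. c * x i) = c * bf d z x"
  using bf_scale_left bf_commute by metis

definition unit_vec :: "nat \<Rightarrow> nat \<Rightarrow> rat" where
  "unit_vec k = (\<lambda>j. if j = k then 1 else 0)"

definition dual_vec :: "nat \<Rightarrow> nat \<Rightarrow> rat" where
  "dual_vec k = (\<lambda>i. if i < 20 then of_int (unimod_gram_inv k i) else 0)"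

lemma bf_unit_vec_20: "bf d x (unit_vec 20) = - 2 * of_int d * x 20"
proof -
  have "bf d x (unit_vec 20) = (\<Sum>i<21. x i * of_int (gram d i 20))"
    unfolding bf_def unit_vec_def by (simp add: if_distrib cong: if_cong)
  also have "\<dots> = (\<Sum>i::nat<21. if i = 20 then x 20 * (- 2 * of_int d) else 0)"
    by (intro sum.cong) (auto simp: gram_def)
  finally show ?thesis by simp
qed

lemma bf_dual_vec:
  assumes "k < 20"
  shows "bf d (dual_vec k) y = y k"
proof -
  have "(\<Sum>i<21. dual_vec k i * of_int (gram d i j)) = (if j = k then 1 else 0)" if "j < 21" for j
  proof -
    have "{..<21::nat} = insert 20 {..<20}" by auto
    then have "(\<Sum>i<21. dual_vec k i * of_int (gram d i j)) = of_int (\<Sum>i<20. unimod_gram_inv k i * gram d i j)"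
      by (simp add: dual_vec_def)
    then show ?thesis using unimod_gram_inv_mult[OF assms that] by simp
  qed
  then have "bf d (dual_vec k) y = (\<Sum>j<21. if j = k then y k else 0)"
    unfolding bf_def sum.swap[of _ "{..<21}"] sum_distrib_right[symmetric]
    by (intro sum.cong) auto
  then show ?thesis using assms by simp
qed

lemma bf_self_split:
  assumes "w 20 = 0"
  shows "bf d (\<lambda>i. s * w i + a * unit_vec 20 i) (\<lambda>i. s * w i + a * unit_vec 20 i) =
    s\<^sup>2 * bf d w w - 2 * of_int d * a\<^sup>2"
proof -
  have "bf d w (unit_vec 20) = 0" "bf d (unit_vec 20) (unit_vec 20) = - 2 * of_int d"
    using assms by (simp_all add: bf_unit_vec_20) (simp add: unit_vec_def)
  then show ?thesis
    by (simp add: bf_add_left bf_add_right bf_scale_left bf_scale_right bf_commute[of d "unit_vec 20" w]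
        power2_eq_square algebra_simps)
qed

lemma LatI:
  assumes "\<And>i. i \<le> 20 \<Longrightarrow> x i \<in> \<int>" and "\<And>i. i \<ge> 21 \<Longrightarrow> x i = 0"
  shows "x \<in> Lat"
proof -
  have "x i \<in> \<int>" for i
    using assms by (cases "i \<le> 20") auto
  then show ?thesis using assms(2) unfolding Lat_def by blast
qed

lemma Lat_Ints: "x \<in> Lat \<Longrightarrow> x i \<in> \<int>"
  unfolding Lat_def by auto

lemma Lat_zero: "x \<in> Lat \<Longrightarrow> i \<ge> 21 \<Longrightarrow> x i = 0"
  unfolding Lat_def by auto

lemma Lat_add: "x \<in> Lat \<Longrightarrow> y \<in> Lat \<Longrightarrow> (\<lambda>i. x i + y i) \<in> Lat"
  unfolding Lat_def by auto

lemma Lat_diff: "x \<in> Lat \<Longrightarrow> y \<in> Lat \<Longrightarrow> (\<lambda>i. x i - y i) \<in> Lat"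
  unfolding Lat_def by auto

lemma Lat_scale: "x \<in> Lat \<Longrightarrow> c \<in> \<int> \<Longrightarrow> (\<lambda>i. c * x i) \<in> Lat"
  unfolding Lat_def by auto

lemma scale_in_Lat_iff:
  assumes "x \<in> Lat"
  shows "(\<lambda>i. c * x i) \<in> Lat \<longleftrightarrow> (\<forall>i<20. c * x i \<in> \<int>) \<and> c * x 20 \<in> \<int>"
proof
  assume "(\<forall>i<20. c * x i \<in> \<int>) \<and> c * x 20 \<in> \<int>"
  then show "(\<lambda>i. c * x i) \<in> Lat"
    using Lat_zero[OF assms] by (intro LatI) (auto simp: le_less)
qed (auto dest: Lat_Ints)

lemma unit_vec_Lat: "unit_vec 20 \<in> Lat"
  unfolding unit_vec_def by (rule LatI) auto

lemma dual_vec_Lat: "dual_vec k \<in> Lat"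
  unfolding dual_vec_def by (rule LatI) auto

lemma bf_Lat_Ints: "x \<in> Lat \<Longrightarrow> y \<in> Lat \<Longrightarrow> bf d x y \<in> \<int>"
  unfolding bf_def by (intro Ints_sum Ints_mult Ints_of_int Lat_Ints)

lemma even_quadratic_form:
  fixes g :: "nat \<Rightarrow> nat \<Rightarrow> int"
  assumes "\<And>i j. g i j = g j i" and "\<And>i. even (g i i)"
  shows "even (\<Sum>i<n. \<Sum>j<n. x i * g i j * x j)"
proof (induction n)
  case (Suc n)
  have "(\<Sum>i<n. x i * g i n * x n) = (\<Sum>j<n. x n * g n j * x j)"
    by (intro sum.cong) (auto simp: assms(1)[of _ n] mult_ac)
  then have "(\<Sum>i<Suc n. \<Sum>j<Suc n. x i * g i j * x j) =
      (\<Sum>i<n. \<Sum>j<n. x i * g i j * x j) + 2 * (\<Sum>j<n. x n * g n j * x j) + x n * g n n * x n"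
    by (simp add: sum.distrib)
  then show ?case using Suc.IH assms(2)[of n] by simp
qed simp

lemma bf_self_even:
  assumes "x \<in> Lat"
  obtains z where "bf d x x = 2 * of_int z"
proof -
  define X where "X i = \<lfloor>x i\<rfloor>" for i
  have "x i = of_int (X i)" for i
    using Lat_Ints[OF assms] unfolding X_def by (metis Ints_cases floor_of_int)
  then have "bf d x x = of_int (\<Sum>i<21. \<Sum>j<21. X i * gram d i j * X j)"
    unfolding bf_def by simp
  moreover have "even (\<Sum>i<21. \<Sum>j<21. X i * gram d i j * X j)"
    by (rule even_quadratic_form) (auto simp: gram_commute gram_def e8m_def)
  then obtain z where "(\<Sum>i<21. \<Sum>j<21. X i * gram d i j * X j) = 2 * z" ..
  ultimately show ?thesis using that[of z] by simp
qed

lemma primitive_scale_Ints: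
  assumes "primitive r" "(\<lambda>i. c * r i) \<in> Lat"
  shows "c \<in> \<int>"
proof -
  have rL: "r \<in> Lat" using assms(1) unfolding primitive_def by simp
  obtain p q where pq: "quotient_of c = (p, q)" by (cases "quotient_of c")
  have q: "q > 0" "coprime p q" "c = of_int p / of_int q"
    using quotient_of_denom_pos[OF pq] quotient_of_coprime[OF pq] quotient_of_div[OF pq] by auto
  have "r i / of_int q \<in> \<int>" for i
  proof -
    obtain R where R: "r i = of_int R" using Lat_Ints[OF rL] by (auto elim: Ints_cases)
    have "(of_int (p * R) / of_int q :: rat) \<in> \<int>"
      using Lat_Ints[OF assms(2), of i] q(3) R by simp
    then have "q dvd p * R"
      using q(1) by (simp only: of_int_div_of_int_in_Ints_iff) simp
    then have "q dvd R"
      using q(2) by (simp add: coprime_dvd_mult_right_iff coprime_commute)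
    then show ?thesis using R by (simp add: of_int_div_of_int_in_Ints_iff)
  qed
  then have "(\<lambda>i. r i / of_int q) \<in> Lat"
    using Lat_zero[OF rL] unfolding Lat_def by auto
  moreover have "r = (\<lambda>i. of_int q * (r i / of_int q))"
    using q(1) by auto
  ultimately have "\<bar>q\<bar> = 1"
    using assms(1) unfolding primitive_def by blast
  then show ?thesis using q by simp
qed

lemma reflection_in_O_Ints:
  assumes "primitive r" "in_O d (reflection d r)" "l \<in> Lat"
  shows "2 * bf d l r / bf d r r \<in> \<int>"
proof -
  have "reflection d r l \<in> Lat"
    using assms(2,3) unfolding in_O_def bij_betw_def by auto
  then have "(\<lambda>i. reflection d r l i - l i) \<in> Lat"
    using assms(3) by (rule Lat_diff)
  also have "(\<lambda>i. reflection d r l i - l i) = (\<lambda>i. - (2 * bf d l r / bf d r r) * r i)"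
    unfolding reflection_def by auto
  finally show ?thesis
    using primitive_scale_Ints[OF assms(1)] by fastforce
qed

lemma reflection_in_O_coord_Ints:
  assumes "primitive r" "in_O d (reflection d r)" "k < 20"
  shows "2 * r k / bf d r r \<in> \<int>"
  using reflection_in_O_Ints[OF assms(1,2) dual_vec_Lat[of k]] bf_dual_vec[OF assms(3)] by simp

lemma reflection_add_scale:
  "reflection d r (\<lambda>i. x i + c * y i) = (\<lambda>i. reflection d r x i + c * reflection d r y i)"
  unfolding reflection_def by (auto simp: bf_add_left bf_scale_left algebra_simps add_divide_distrib)

definition dual_gen :: "int \<Rightarrow> nat \<Rightarrow> rat" where
  "dual_gen d = (\<lambda>i. 1 / (2 * of_int d) * unit_vec 20 i)"

lemma bf_dual_gen:
  assumes "d \<noteq> 0"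
  shows "bf d (dual_gen d) y = - y 20"
  using assms unfolding dual_gen_def bf_scale_left
  by (simp add: bf_commute[of d "unit_vec 20"] bf_unit_vec_20)

lemma dual_gen_in_dual_lat:
  assumes "d \<noteq> 0"
  shows "dual_gen d \<in> dual_lat d"
  unfolding dual_lat_def QV_def
  by (simp add: bf_dual_gen[OF assms] Lat_Ints) (simp add: dual_gen_def unit_vec_def)

lemma dual_lat_decompose:
  assumes "d \<noteq> 0" "x \<in> dual_lat d"
  obtains l m where "l \<in> Lat" "x = (\<lambda>i. l i + of_int m * dual_gen d i)"
proof -
  have x: "\<And>l. l \<in> Lat \<Longrightarrow> bf d x l \<in> \<int>" "\<And>i. i \<ge> 21 \<Longrightarrow> x i = 0"
    using assms(2) unfolding dual_lat_def QV_def by auto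
  obtain m where m: "2 * of_int d * x 20 = of_int m"
    using x(1)[OF unit_vec_Lat] by (auto simp: bf_unit_vec_20 elim!: Ints_cases)
  define l where "l = (\<lambda>i. x i + of_int (- m) * dual_gen d i)"
  have "l \<in> Lat"
  proof (rule LatI)
    fix i :: nat
    assume "i \<le> 20"
    then consider "i < 20" | "i = 20" by linarith
    then show "l i \<in> \<int>"
    proof cases
      case 1
      then show ?thesis
        using x(1)[OF dual_vec_Lat[of i]] bf_dual_vec[OF 1, of d x] bf_commute[of d x]
        by (simp add: l_def dual_gen_def unit_vec_def)
    next
      case 2
      then show ?thesis
        using m assms(1) by (simp add: l_def dual_gen_def unit_vec_def field_simps)
    qed
  qed (simp add: l_def x(2) dual_gen_def unit_vec_def)
  moreover have "x = (\<lambda>i. l i + of_int m * dual_gen d i)"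
    by (simp add: l_def)
  ultimately show ?thesis by (rule that)
qed

lemma reflection_on_dual_lat_iff:
  assumes "d \<noteq> 0" "in_O d (reflection d r)" "c \<in> \<int>"
  shows "(\<forall>x\<in>dual_lat d. (\<lambda>i. reflection d r x i + c * x i) \<in> Lat) \<longleftrightarrow>
    (\<lambda>i. reflection d r (dual_gen d) i + c * dual_gen d i) \<in> Lat"
proof
  assume gen: "(\<lambda>i. reflection d r (dual_gen d) i + c * dual_gen d i) \<in> Lat"
  show "\<forall>x\<in>dual_lat d. (\<lambda>i. reflection d r x i + c * x i) \<in> Lat"
  proof
    fix x
    assume "x \<in> dual_lat d"
    then obtain l m where l: "l \<in> Lat" and x: "x = (\<lambda>i. l i + of_int m * dual_gen d i)"
      using dual_lat_decompose[OF assms(1)] by blast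
    have "reflection d r l \<in> Lat"
      using assms(2) l unfolding in_O_def bij_betw_def by auto
    then have "(\<lambda>i. reflection d r l i + c * l i) \<in> Lat"
      using Lat_add Lat_scale[OF l assms(3)] by blast
    then have "(\<lambda>i. (reflection d r l i + c * l i) +
        of_int m * (reflection d r (dual_gen d) i + c * dual_gen d i)) \<in> Lat"
      using Lat_add[OF _ Lat_scale[OF gen Ints_of_int]] by blast
    then show "(\<lambda>i. reflection d r x i + c * x i) \<in> Lat"
      unfolding x reflection_add_scale by (simp add: algebra_simps)
  qed
qed (use dual_gen_in_dual_lat[OF assms(1)] in blast)

lemma reflection_dual_gen:
  assumes "d \<noteq> 0"
  shows "reflection d r (dual_gen d) = (\<lambda>i. dual_gen d i + 2 * r 20 / bf d r r * r i)"
  unfolding reflection_def bf_dual_gen[OF assms] by simp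

lemma induces_id_reflection_iff:
  assumes "d \<noteq> 0" "primitive r" "bf d r r \<noteq> 0" "in_O d (reflection d r)"
  shows "induces_id d (reflection d r) \<longleftrightarrow> bf d r r = 2 \<or> bf d r r = -2"
proof -
  let ?N = "bf d r r"
  have rL: "r \<in> Lat" using assms(2) unfolding primitive_def by simp
  have "induces_id d (reflection d r) \<longleftrightarrow>
      (\<lambda>i. reflection d r (dual_gen d) i + (-1) * dual_gen d i) \<in> Lat"
    using reflection_on_dual_lat_iff[OF assms(1,4), of "-1"] by (simp add: induces_id_def)
  also have "\<dots> \<longleftrightarrow> (\<lambda>i. 2 * r 20 / ?N * r i) \<in> Lat"
    by (simp add: reflection_dual_gen[OF assms(1)])
  also have "\<dots> \<longleftrightarrow> 2 * r 20 / ?N \<in> \<int>"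
    using primitive_scale_Ints[OF assms(2)] Lat_scale[OF rL] by blast
  also have "\<dots> \<longleftrightarrow> ?N = 2 \<or> ?N = -2"
  proof
    assume "2 * r 20 / ?N \<in> \<int>"
    then have "(\<lambda>i. 2 / ?N * r i) \<in> Lat"
      unfolding scale_in_Lat_iff[OF rL] using reflection_in_O_coord_Ints[OF assms(2,4)] by simp
    then have "2 / ?N \<in> \<int>"
      by (rule primitive_scale_Ints[OF assms(2)])
    moreover obtain z where z: "?N = 2 * of_int z"
      using bf_self_even[OF rL] .
    ultimately have "(of_int 1 / of_int z :: rat) \<in> \<int>"
      using assms(3) by simp
    then have "z dvd 1"
      using z assms(3) by (simp only: of_int_div_of_int_in_Ints_iff) simp
    then show "?N = 2 \<or> ?N = -2"
      using z by (auto simp: zdvd1_eq abs_if split: if_splits)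
  qed (auto simp: Lat_Ints[OF rL])
  finally show ?thesis .
qed

lemma bf_self_of_divisible_unimod_part:
  assumes "d \<noteq> 0" "r \<in> Lat" "\<And>i. i < 20 \<Longrightarrow> r i / of_int d \<in> \<int>" "r 20 = of_int a"
  obtains q where "bf d r r = of_int (2 * d * (d * q - a\<^sup>2))"
proof -
  define w where "w = (\<lambda>i. if i < 20 then r i / of_int d else 0)"
  have wL: "w \<in> Lat"
    using assms(3) by (intro LatI) (auto simp: w_def)
  have "r = (\<lambda>i. of_int d * w i + of_int a * unit_vec 20 i)"
  proof
    fix i :: nat
    consider "i < 20" | "i = 20" | "i \<ge> 21" by linarith
    then show "r i = of_int d * w i + of_int a * unit_vec 20 i"
      by cases (use assms(1,4) Lat_zero[OF assms(2)] in \<open>auto simp: w_def unit_vec_def\<close>)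
  qed
  moreover have "w 20 = 0"
    by (simp add: w_def)
  ultimately have "bf d r r = of_int d ^ 2 * bf d w w - 2 * of_int d * of_int a ^ 2"
    using bf_self_split[of w d "of_int d" "of_int a"] by simp
  moreover obtain q where "bf d w w = 2 * of_int q"
    using bf_self_even[OF wL] .
  ultimately show ?thesis
    using that[of q] by (simp add: algebra_simps power2_eq_square)
qed

lemma minus_id_at_dual_gen_imp_Ints:
  assumes "d \<noteq> 0" "primitive r" "in_O d (reflection d r)"
    and v: "(\<lambda>i. unit_vec 20 i / of_int d + 2 * r 20 / bf d r r * r i) \<in> Lat"
  shows "2 * of_int d / bf d r r \<in> \<int>"
proof -
  let ?N = "bf d r r" and ?c = "2 * r 20 / bf d r r"
  have rL: "r \<in> Lat" using assms(2) unfolding primitive_def by simp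
  have "(\<lambda>i. of_int d * (unit_vec 20 i / of_int d + ?c * r i) - unit_vec 20 i) \<in> Lat"
    using Lat_diff[OF Lat_scale[OF v Ints_of_int] unit_vec_Lat] by simp
  also have "(\<lambda>i. of_int d * (unit_vec 20 i / of_int d + ?c * r i) - unit_vec 20 i) =
      (\<lambda>i. (of_int d * ?c) * r i)"
    using assms(1) by (simp add: field_simps)
  finally have dc: "of_int d * ?c \<in> \<int>"
    by (rule primitive_scale_Ints[OF assms(2)])
  have "(\<lambda>i. 2 * of_int d / ?N * r i) \<in> Lat"
    unfolding scale_in_Lat_iff[OF rL]
  proof
    show "\<forall>i<20. 2 * of_int d / ?N * r i \<in> \<int>"
    proof (intro allI impI)
      fix i :: nat
      assume "i < 20"
      have "2 * of_int d / ?N * r i = of_int d * (2 * r i / ?N)" by simp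
      also have "\<dots> \<in> \<int>"
        using reflection_in_O_coord_Ints[OF assms(2,3) \<open>i < 20\<close>] by (intro Ints_mult Ints_of_int)
      finally show "2 * of_int d / ?N * r i \<in> \<int>" .
    qed
    show "2 * of_int d / ?N * r 20 \<in> \<int>"
      using dc by (simp add: field_simps)
  qed
  then show ?thesis
    by (rule primitive_scale_Ints[OF assms(2)])
qed

lemma minus_id_at_dual_gen_imp_sq:
  assumes "d \<noteq> 0" "primitive r" "bf d r r \<noteq> 0" "in_O d (reflection d r)"
    and v: "(\<lambda>i. unit_vec 20 i / of_int d + 2 * r 20 / bf d r r * r i) \<in> Lat"
  shows "bf d r r = of_int (2 * d) \<or> bf d r r = of_int (-2 * d)"
proof -
  let ?N = "bf d r r"
  have rL: "r \<in> Lat" using assms(2) unfolding primitive_def by simp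
  obtain a where a: "r 20 = of_int a" using Lat_Ints[OF rL] by (auto elim: Ints_cases)
  obtain k where k: "2 * of_int d / ?N = of_int k"
    using minus_id_at_dual_gen_imp_Ints[OF assms(1,2,4) v] by (elim Ints_cases)
  obtain z where z: "?N = 2 * of_int z"
    using bf_self_even[OF rL] .
  \<comment> \<open>k divides d, and the last coordinate of v says that d divides 1 + k a^2, so k is a unit.\<close>
  have "(of_int d :: rat) = of_int (k * z)"
    using k z assms(3) by (simp add: field_simps)
  then have dkz: "d = k * z"
    by (simp only: of_int_eq_iff)
  have "unit_vec 20 20 / of_int d + 2 * r 20 / ?N * r 20 = of_int (1 + k * a\<^sup>2) / of_int d"
    using k a assms(1,3) by (simp add: unit_vec_def field_simps power2_eq_square)
  then have "d dvd 1 + k * a\<^sup>2"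
    using Lat_Ints[OF v, of 20] assms(1) by (simp only: of_int_div_of_int_in_Ints_iff) simp
  moreover have "k dvd d"
    using dkz by simp
  ultimately have "k dvd 1 + k * a\<^sup>2"
    by (rule dvd_trans[rotated])
  then have "k dvd 1"
    by (simp add: dvd_add_left_iff)
  then have "z = d \<or> z = - d"
    using dkz by (auto simp: zdvd1_eq abs_if split: if_splits)
  then show ?thesis
    using z by auto
qed

lemma reflective_sq_2d_sign:
  assumes "d \<noteq> 0" "primitive r" "in_O d (reflection d r)" "r 20 = of_int a"
    and s: "bf d r r = 2 * of_int d * of_int s" "s = 1 \<or> s = -1"
  obtains q where "s = d * q - a\<^sup>2"
proof -
  have rL: "r \<in> Lat" using assms(2) unfolding primitive_def by simp
  have "r i / of_int d \<in> \<int>" if "i < 20" for i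
  proof -
    have "r i / of_int d = of_int s * (2 * r i / bf d r r)"
      using s assms(1) by (auto simp: field_simps)
    also have "\<dots> \<in> \<int>"
      using reflection_in_O_coord_Ints[OF assms(2,3) that] by (intro Ints_mult Ints_of_int)
    finally show ?thesis .
  qed
  then obtain q where "bf d r r = of_int (2 * d * (d * q - a\<^sup>2))"
    using bf_self_of_divisible_unimod_part[OF assms(1) rL _ assms(4)] by blast
  then have "(of_int (2 * d * s) :: rat) = of_int (2 * d * (d * q - a\<^sup>2))"
    using s(1) by simp
  then have "2 * d * s = 2 * d * (d * q - a\<^sup>2)"
    by (simp only: of_int_eq_iff)
  then show ?thesis
    using assms(1) that by simp
qed

lemma minus_id_at_dual_gen_if_sq:
  assumes "d \<noteq> 0" "primitive r" "in_O d (reflection d r)"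
    and N: "bf d r r = of_int (2 * d) \<or> bf d r r = of_int (-2 * d)"
  shows "(\<lambda>i. unit_vec 20 i / of_int d + 2 * r 20 / bf d r r * r i) \<in> Lat"
proof -
  let ?N = "bf d r r" and ?c = "2 * r 20 / bf d r r"
  have rL: "r \<in> Lat" using assms(2) unfolding primitive_def by simp
  obtain a where a: "r 20 = of_int a" using Lat_Ints[OF rL] by (auto elim: Ints_cases)
  define s :: int where "s = (if ?N = of_int (2 * d) then 1 else -1)"
  have s: "?N = 2 * of_int d * of_int s" "s = 1 \<or> s = -1"
    using N unfolding s_def by auto
  obtain q where sq: "s = d * q - a\<^sup>2"
    using reflective_sq_2d_sign[OF assms(1-3) a s] .
  show ?thesis
  proof (rule LatI)
    fix i :: nat
    assume "i \<le> 20"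
    then consider "i < 20" | "i = 20" by linarith
    then show "unit_vec 20 i / of_int d + ?c * r i \<in> \<int>"
    proof cases
      case 1
      have "unit_vec 20 i / of_int d + ?c * r i = r 20 * (2 * r i / ?N)"
        using 1 by (simp add: unit_vec_def)
      also have "\<dots> \<in> \<int>"
        using reflection_in_O_coord_Ints[OF assms(2,3) 1] Lat_Ints[OF rL] by (intro Ints_mult)
      finally show ?thesis .
    next
      case 2
      have "1 + s * a\<^sup>2 = d * (s * q)"
        using sq s(2) by (auto simp: algebra_simps)
      then have "(1 + of_int s * of_int a ^ 2 :: rat) = of_int d * of_int (s * q)"
        by (metis of_int_1 of_int_add of_int_mult of_int_power)
      moreover have "unit_vec 20 i / of_int d + ?c * r i = (1 + of_int s * of_int a ^ 2) / of_int d"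
        using 2 s a assms(1) by (auto simp: unit_vec_def field_simps power2_eq_square)
      ultimately show ?thesis
        using assms(1) by simp
    qed
  qed (use Lat_zero[OF rL] in \<open>simp add: unit_vec_def\<close>)
qed

lemma induces_minus_id_reflection_iff:
  assumes "d \<noteq> 0" "primitive r" "bf d r r \<noteq> 0" "in_O d (reflection d r)"
  shows "induces_minus_id d (reflection d r) \<longleftrightarrow>
    bf d r r = of_int (2 * d) \<or> bf d r r = of_int (-2 * d)"
proof -
  have "induces_minus_id d (reflection d r) \<longleftrightarrow>
      (\<lambda>i. reflection d r (dual_gen d) i + 1 * dual_gen d i) \<in> Lat"
    using reflection_on_dual_lat_iff[OF assms(1,4), of 1] by (simp add: induces_minus_id_def)
  also have "\<dots> \<longleftrightarrow> (\<lambda>i. unit_vec 20 i / of_int d + 2 * r 20 / bf d r r * r i) \<in> Lat"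
    unfolding reflection_dual_gen[OF assms(1)] by (simp add: dual_gen_def)
  finally show ?thesis
    using minus_id_at_dual_gen_imp_sq[OF assms] minus_id_at_dual_gen_if_sq[OF assms(1,2,4)] by blast
qed

lemma int_ideal_eq_multiples:
  fixes T :: "int set"
  assumes diff: "\<And>x y. x \<in> T \<Longrightarrow> y \<in> T \<Longrightarrow> x - y \<in> T"
    and mult: "\<And>m x. x \<in> T \<Longrightarrow> m * x \<in> T"
    and "z \<in> T" "z \<noteq> 0"
  obtains k where "k > 0" "T = range (\<lambda>m. k * m)"
proof -
  have "\<bar>z\<bar> \<in> T"
    using mult[OF assms(3), of "sgn z"] by (simp add: abs_sgn mult.commute)
  then have ex: "\<exists>n::nat. n > 0 \<and> int n \<in> T"
    using assms(4) by (intro exI[of _ "nat \<bar>z\<bar>"]) simp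
  define n where "n = (LEAST n::nat. n > 0 \<and> int n \<in> T)"
  have n: "n > 0" "int n \<in> T"
    using LeastI_ex[OF ex] unfolding n_def by auto
  have dvd: "int n dvd x" if "x \<in> T" for x
  proof (rule ccontr)
    assume "\<not> int n dvd x"
    then have pos: "x mod int n > 0"
      using n(1) by (simp add: dvd_eq_mod_eq_0 order_le_neq_trans)
    have "x mod int n \<in> T"
      using diff[OF that mult[OF n(2), of "x div int n"]] by (simp add: minus_div_mult_eq_mod)
    then have "int (nat (x mod int n)) \<in> T"
      using pos by simp
    then have "n \<le> nat (x mod int n)"
      using pos unfolding n_def by (intro Least_le) simp
    moreover have "x mod int n < int n"
      using n(1) by simp
    ultimately show False
      using pos by (simp add: le_nat_iff)
  qed
  have "T = range (\<lambda>m. int n * m)"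
  proof (intro set_eqI iffI)
    fix x
    assume "x \<in> T"
    then obtain m where "x = int n * m"
      using dvd[OF \<open>x \<in> T\<close>] by (elim dvdE)
    then show "x \<in> range (\<lambda>m. int n * m)" by blast
  qed (use mult[OF n(2)] in \<open>auto simp: mult.commute\<close>)
  with n(1) show ?thesis
    by (intro that[of "int n"]) simp_all
qed

lemma bf_values_eq_multiples:
  assumes "r \<in> Lat" "bf d r r \<noteq> 0"
  obtains k where "k > 0" "{bf d l r | l. l \<in> Lat} = {of_int (k * m) | m. True}"
proof -
  let ?S = "{bf d l r | l. l \<in> Lat}"
  define T where "T = {z. of_int z \<in> ?S}"
  have S: "?S = {of_int z | z. z \<in> T}"
  proof (intro set_eqI iffI)
    fix s
    assume "s \<in> ?S"
    then obtain l where l: "l \<in> Lat" "s = bf d l r" by blast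
    then obtain z where "s = of_int z"
      using bf_Lat_Ints[OF _ assms(1)] by (metis Ints_cases)
    then show "s \<in> {of_int z | z. z \<in> T}"
      unfolding T_def using l by fastforce
  qed (auto simp: T_def)
  obtain z where z: "bf d r r = of_int z"
    using bf_Lat_Ints[OF assms(1,1), where d = d] by (elim Ints_cases)
  obtain k where k: "k > 0" "T = range (\<lambda>m. k * m)"
  proof (rule int_ideal_eq_multiples)
    fix x y
    assume "x \<in> T" "y \<in> T"
    then obtain l l' where "l \<in> Lat" "l' \<in> Lat" "bf d l r = of_int x" "bf d l' r = of_int y"
      unfolding T_def by auto
    then show "x - y \<in> T"
      unfolding T_def using Lat_diff
      by (auto intro!: exI[of _ "\<lambda>i. l i - l' i"] simp: bf_diff_left)
  next
    fix m x
    assume "x \<in> T"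
    then obtain l where "l \<in> Lat" "bf d l r = of_int x"
      unfolding T_def by auto
    then show "m * x \<in> T"
      unfolding T_def using Lat_scale[of l "of_int m"]
      by (auto intro!: exI[of _ "\<lambda>i. of_int m * l i"] simp: bf_scale_left)
  next
    show "z \<in> T" unfolding T_def using z assms(1) by (auto intro!: exI[of _ r])
    show "z \<noteq> 0" using z assms(2) by auto
  qed
  have "?S = {of_int (k * m) | m. True}"
    unfolding S k(2) by (auto simp del: of_int_mult)
  with k(1) show ?thesis
    by (rule that)
qed

lemma multiples_eq_imp_eq:
  fixes k k' :: int
  assumes "k > 0" "k' > 0"
    and "{of_int (k * m) | m. True} = ({of_int (k' * m) | m. True} :: 'a :: ring_char_0 set)"
  shows "k = k'"
proof -
  have "(of_int (k * 1) :: 'a) \<in> {of_int (k' * m) | m. True}"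
    "(of_int (k' * 1) :: 'a) \<in> {of_int (k * m) | m. True}"
    using assms(3) by blast+
  then obtain m m' where "(of_int (k * 1) :: 'a) = of_int (k' * m)" "(of_int (k' * 1) :: 'a) = of_int (k * m')"
    by blast
  then have "k = k' * m" "k' = k * m'"
    by (simp_all only: of_int_eq_iff)
  then have "k' dvd k" "k dvd k'"
    by (metis dvd_triv_left)+
  then show ?thesis
    using assms(1,2) by (simp add: zdvd_antisym_nonneg)
qed

lemma divisibility_generates:
  assumes "r \<in> Lat" "bf d r r \<noteq> 0"
  shows "divisibility d r > 0 \<and>
    {bf d l r | l. l \<in> Lat} = {of_int (divisibility d r * m) | m. True}"
proof -
  obtain k where k: "k > 0" "{bf d l r | l. l \<in> Lat} = {of_int (k * m) | m. True}"
    using bf_values_eq_multiples[OF assms] .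
  moreover have "k' = k" if "k' > 0 \<and> {bf d l r | l. l \<in> Lat} = {of_int (k' * m) | m. True}" for k'
    using multiples_eq_imp_eq[where 'a = rat, of k' k] that k by (simp del: of_int_mult)
  ultimately have "\<exists>!k. k > 0 \<and> {bf d l r | l. l \<in> Lat} = {of_int (k * m) | m. True}"
    by blast
  then show ?thesis
    unfolding divisibility_def by (rule theI')
qed

lemma divisibility_reflective:
  assumes "d > 0" "primitive r" "in_O d (reflection d r)"
    and N: "bf d r r = of_int (2 * d) \<or> bf d r r = of_int (-2 * d)"
  shows "divisibility d r \<in> {d, 2 * d}"
proof -
  let ?K = "divisibility d r"
  have rL: "r \<in> Lat" using assms(2) unfolding primitive_def by simp
  define n where "n = (if bf d r r = of_int (2 * d) then 2 * d else -2 * d)"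
  have n: "bf d r r = of_int n" "\<bar>n\<bar> = 2 * d"
    using N assms(1) unfolding n_def by auto
  then have "bf d r r \<noteq> 0" using assms(1) by auto
  note K = divisibility_generates[OF rL this]
  have "bf d r r \<in> {bf d l r | l. l \<in> Lat}" using rL by blast
  then obtain m where "(of_int n :: rat) = of_int (?K * m)"
    using K n(1) by auto
  then have "?K dvd n"
    by (simp only: of_int_eq_iff) simp
  then have K2d: "?K dvd 2 * d"
    using n(2) by (metis dvd_abs_iff)
  have "(of_int ?K :: rat) \<in> {bf d l r | l. l \<in> Lat}"
    using K by (metis (mono_tags, lifting) mem_Collect_eq mult.right_neutral)
  then obtain l where "l \<in> Lat" "bf d l r = of_int ?K" by auto
  then have "(of_int (2 * ?K) / of_int n :: rat) \<in> \<int>"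
    using reflection_in_O_Ints[OF assms(2,3)] n(1) by fastforce
  then have "n dvd 2 * ?K"
    using n(2) assms(1) by (simp only: of_int_div_of_int_in_Ints_iff) auto
  then have "2 * d dvd 2 * ?K"
    using n(2) by (metis abs_dvd_iff)
  then have "d dvd ?K"
    by simp
  then obtain t where t: "?K = d * t" by (elim dvdE)
  then have "t > 0" "t dvd 2"
    using K K2d assms(1) by (auto simp: zero_less_mult_iff mult.commute[of d])
  then have "t = 1 \<or> t = 2"
    using zdvd_imp_le[of t 2] by linarith
  then show ?thesis using t by auto
qed

theorem corollary4p4:
  fixes d :: int and r :: "nat \<Rightarrow> rat"
  assumes "d \<ge> 1"
    and "primitive r"
    and "bf d r r \<noteq> 0"
    and "in_O d (reflection d r)"
  shows "(induces_id d (reflection d r) \<or> induces_minus_id d (reflection d r)) \<longleftrightarrow>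
           (bf d r r = 2 \<or> bf d r r = -2 \<or>
            ((bf d r r = of_int (2 * d) \<or> bf d r r = of_int (-2 * d)) \<and>
             divisibility d r \<in> {d, 2 * d}))"
proof -
  have "d \<noteq> 0" "d > 0" using assms(1) by auto
  then show ?thesis
    using induces_id_reflection_iff[OF \<open>d \<noteq> 0\<close> assms(2-4)]
      induces_minus_id_reflection_iff[OF \<open>d \<noteq> 0\<close> assms(2-4)]
      divisibility_reflective[OF \<open>d > 0\<close> assms(2,4)]
    by blast
qed

end
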